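(* Let $G$ be a mixed abelian group in which every subgroup is an essential subgroup of some direct summand of $G$. Then the torsion subgroup of $G$ is divisible.
   Context: All groups are additively written abelian groups; a mixed group contains both non-zero elements of finite order and elements of infinite order. A subgroup $H$ of a group $A$ is essential in $A$ if $H \cap S \neq \{0\}$ for every non-zero subgroup $S$ of $A$. *)

theory Defs
  imports Main
begin

text \<open>Abelian groups are modelled by the type class ab_group_add: the group G
is the whole type 'a (written additively).\<close>

primrec nmul :: "nat \<Rightarrow> 'a::ab_group_add \<Rightarrow> 'a" where
  "nmul 0 x = 0"
| "nmul (Suc n) x = x + nmul n x"

definition subgrp :: "'a::ab_group_add set \<Rightarrow> bool" where
  "subgrp H \<longleftrightarrow> 0 \<in> H \<and> (\<forall>x\<in>H. \<forall>y\<in>H. x + y \<in> H) \<and> (\<forall>x\<in>H. - x \<in> H)"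

definition finite_order :: "'a::ab_group_add \<Rightarrow> bool" where
  "finite_order x \<longleftrightarrow> (\<exists>n>0. nmul n x = 0)"

definition mixed_group :: "'a::ab_group_add itself \<Rightarrow> bool" where
  "mixed_group _ \<longleftrightarrow> (\<exists>x::'a. x \<noteq> 0 \<and> finite_order x) \<and> (\<exists>y::'a. \<not> finite_order y)"

definition torsion_part :: "'a::ab_group_add set" where
  "torsion_part = {x. finite_order x}"

definition direct_summand :: "'a::ab_group_add set \<Rightarrow> bool" where
  "direct_summand D \<longleftrightarrow> subgrp D \<and>
     (\<exists>E. subgrp E \<and> D \<inter> E = {0} \<and> (\<forall>z. \<exists>d\<in>D. \<exists>e\<in>E. z = d + e))"

definition essential_in :: "'a::ab_group_add set \<Rightarrow> 'a set \<Rightarrow> bool" where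
  "essential_in H D \<longleftrightarrow> subgrp H \<and> subgrp D \<and> H \<subseteq> D \<and>
     (\<forall>S. subgrp S \<and> S \<subseteq> D \<and> S \<noteq> {0} \<longrightarrow> H \<inter> S \<noteq> {0})"

definition divisible_set :: "'a::ab_group_add set \<Rightarrow> bool" where
  "divisible_set T \<longleftrightarrow> (\<forall>x\<in>T. \<forall>n>0. \<exists>y\<in>T. nmul n y = x)"

end

theory Submission
  imports Defs
begin

text \<open>Let \<open>t\<close> be a torsion element, \<open>n > 0\<close>, and \<open>x\<close> an element of infinite order. Then
  \<open>w = n x + t\<close> has infinite order, so the cyclic group \<open>\<langle>w\<rangle>\<close> is torsion-free; by hypothesis it is
  essential in a direct summand \<open>D\<close>, \<open>G = D \<oplus> E\<close>, and an essential extension of a torsion-free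
  group is torsion-free. Hence the torsion element \<open>t\<close> lies in \<open>E\<close>. Writing \<open>x = d + e\<close>, the
  element \<open>w - n d = n e + t\<close> lies in \<open>D \<inter> E = 0\<close>, so \<open>t = n (-e)\<close> with \<open>-e\<close> torsion.\<close>

lemma nmul_add: "nmul (m + k) x = nmul m x + nmul k (x::'a::ab_group_add)"
  by (induction m) (simp_all add: add.assoc)

lemma nmul_add_distrib: "nmul k (x + y) = nmul k x + nmul k (y::'a::ab_group_add)"
  by (induction k) (simp_all add: algebra_simps)

lemma nmul_zero_right [simp]: "nmul k (0::'a::ab_group_add) = 0"
  by (induction k) simp_all

lemma nmul_minus: "nmul k (- x) = - nmul k (x::'a::ab_group_add)"
  by (induction k) (simp_all add: algebra_simps)

lemma nmul_mult: "nmul (m * k) x = nmul m (nmul k (x::'a::ab_group_add))"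
  by (induction m) (simp_all add: nmul_add nmul_add_distrib)

lemma nmul_in_subgrp: "subgrp D \<Longrightarrow> x \<in> D \<Longrightarrow> nmul k x \<in> D"
  by (induction k) (auto simp: subgrp_def)

lemma subgrp_diff: "subgrp D \<Longrightarrow> x \<in> D \<Longrightarrow> y \<in> D \<Longrightarrow> x - y \<in> D"
  unfolding subgrp_def by (metis diff_conv_add_uminus)

lemma finite_order_zero: "finite_order (0::'a::ab_group_add)"
  unfolding finite_order_def by (rule exI[of _ 1]) simp

lemma finite_order_minus_iff: "finite_order (- x) \<longleftrightarrow> finite_order (x::'a::ab_group_add)"
  unfolding finite_order_def by (metis nmul_minus neg_equal_0_iff_equal)

lemma finite_order_add:
  assumes "finite_order x" "finite_order (y::'a::ab_group_add)"
  shows "finite_order (x + y)"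
proof -
  obtain a where a: "a > 0" "nmul a x = 0" using assms(1) finite_order_def by blast
  obtain b where b: "b > 0" "nmul b y = 0" using assms(2) finite_order_def by blast
  have "nmul (a * b) (x + y) = 0"
    by (metis a(2) b(2) mult.commute nmul_add_distrib nmul_mult nmul_zero_right add_0)
  then show ?thesis unfolding finite_order_def using a b by (metis mult_pos_pos)
qed

lemma finite_order_add_cancel:
  "finite_order (y + t) \<Longrightarrow> finite_order t \<Longrightarrow> finite_order (y::'a::ab_group_add)"
  using finite_order_add[of "y + t" "- t"] finite_order_minus_iff[of t] by simp

lemma finite_order_nmul_iff:
  assumes "k > 0"
  shows "finite_order (nmul k x) \<longleftrightarrow> finite_order (x::'a::ab_group_add)"
proof
  assume "finite_order (nmul k x)"
  then obtain a where "a > 0" "nmul (a * k) x = 0"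
    unfolding finite_order_def nmul_mult by blast
  then show "finite_order x"
    unfolding finite_order_def using assms by (metis mult_pos_pos)
next
  assume "finite_order x"
  then obtain a where "a > 0" "nmul a x = 0" unfolding finite_order_def by blast
  then show "finite_order (nmul k x)"
    unfolding finite_order_def by (metis mult.commute nmul_mult nmul_zero_right)
qed

lemma subgrp_torsion_elements: "subgrp D \<Longrightarrow> subgrp {u \<in> D. finite_order u}"
  unfolding subgrp_def by (auto simp: finite_order_zero finite_order_add finite_order_minus_iff)

definition torsion_free :: "'a::ab_group_add set \<Rightarrow> bool" where
  "torsion_free A \<longleftrightarrow> (\<forall>z\<in>A. finite_order z \<longrightarrow> z = 0)"

lemma torsion_free_if_essential:
  assumes "essential_in H D" "torsion_free H"
  shows "torsion_free D"
proof -
  define S where "S = {u \<in> D. finite_order u}"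
  have "subgrp S" "S \<subseteq> D"
    using assms(1) subgrp_torsion_elements by (auto simp: S_def essential_in_def)
  moreover have "H \<inter> S = {0}"
    using assms \<open>subgrp S\<close> by (auto simp: S_def torsion_free_def essential_in_def subgrp_def)
  ultimately have "S = {0}"
    using assms(1) unfolding essential_in_def by metis
  then show ?thesis by (auto simp: S_def torsion_free_def)
qed

text \<open>Integer multiples of \<open>w\<close> are written as differences of natural multiples, because
  \<^const>\<open>nmul\<close> only takes natural coefficients.\<close>
definition cyclic_subgrp :: "'a::ab_group_add \<Rightarrow> 'a set" where
  "cyclic_subgrp w = {nmul a w - nmul b w | a b. True}"

lemma subgrp_cyclic_subgrp: "subgrp (cyclic_subgrp w)"
  unfolding subgrp_def cyclic_subgrp_def
proof (intro conjI ballI)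
  show "0 \<in> {nmul a w - nmul b w |a b. True}" by force
next
  fix u v assume "u \<in> {nmul a w - nmul b w |a b. True}" "v \<in> {nmul a w - nmul b w |a b. True}"
  then obtain a b c d where "u = nmul a w - nmul b w" "v = nmul c w - nmul d w" by blast
  then have "u + v = nmul (a + c) w - nmul (b + d) w" by (simp add: nmul_add algebra_simps)
  then show "u + v \<in> {nmul a w - nmul b w |a b. True}" by blast
next
  fix u assume "u \<in> {nmul a w - nmul b w |a b. True}"
  then obtain a b where "- u = nmul b w - nmul a w" by force
  then show "- u \<in> {nmul a w - nmul b w |a b. True}" by blast
qed

lemma generator_in_cyclic_subgrp: "w \<in> cyclic_subgrp w"
  unfolding cyclic_subgrp_def by (rule CollectI, rule exI[of _ 1], rule exI[of _ 0]) simp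

lemma torsion_free_cyclic_subgrp:
  assumes "\<not> finite_order w"
  shows "torsion_free (cyclic_subgrp w)"
proof -
  have "z = 0" if "finite_order z" "z = nmul a w - nmul b w" "b \<le> a" for z a b
  proof -
    have "z = nmul (a - b) w" using that(2,3) nmul_add[of "a - b" b w] by simp
    then show "z = 0" using that(1) assms finite_order_nmul_iff[of "a - b" w] by force
  qed
  then have "z = 0" if "finite_order z" "z = nmul a w - nmul b w" for z a b
    using that finite_order_minus_iff[of z] by (metis linear minus_diff_eq neg_equal_0_iff_equal)
  then show ?thesis unfolding torsion_free_def cyclic_subgrp_def by blast
qed

lemma torsion_free_summand_component_zero:
  assumes D: "subgrp D" "torsion_free D" and E: "subgrp E" "D \<inter> E = {0}"
    and "d \<in> D" "e \<in> E" "finite_order (d + e)"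
  shows "d = 0"
proof -
  obtain m where m: "m > 0" "nmul m (d + e) = 0" using assms(7) finite_order_def by blast
  then have "nmul m d = - nmul m e"
    by (simp add: nmul_add_distrib eq_neg_iff_add_eq_0)
  moreover have "nmul m d \<in> D" "- nmul m e \<in> E"
    using assms(5,6) D(1) E(1) nmul_in_subgrp[of E e m] nmul_in_subgrp[of D d m]
    by (auto simp: subgrp_def)
  ultimately have "nmul m d = 0" using E(2) by (metis IntI singletonD)
  then show "d = 0" using D(2) assms(5) m(1) by (auto simp: torsion_free_def finite_order_def)
qed

lemma torsion_divisible_if_summand_torsion_free:
  fixes t x :: "'a::ab_group_add"
  assumes D: "subgrp D" "torsion_free D" and E: "subgrp E" "D \<inter> E = {0}"
    and decomp: "\<forall>z. \<exists>d\<in>D. \<exists>e\<in>E. z = d + e"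
    and t: "finite_order t" and n: "n > 0" and w: "nmul n x + t \<in> D"
  shows "\<exists>y. finite_order y \<and> nmul n y = t"
proof -
  obtain d' e' where "d' \<in> D" "e' \<in> E" "t = d' + e'" using decomp by blast
  then have tE: "t \<in> E"
    using torsion_free_summand_component_zero[OF D E] t by force
  obtain d e where de: "d \<in> D" "e \<in> E" "x = d + e" using decomp by blast
  have "nmul n x + t - nmul n d = nmul n e + t"
    using de(3) by (simp add: nmul_add_distrib)
  moreover have "nmul n x + t - nmul n d \<in> D"
    using subgrp_diff[OF D(1) w nmul_in_subgrp[OF D(1) de(1)]] .
  moreover have "nmul n e + t \<in> E"
    using E(1) de(2) tE nmul_in_subgrp[of E e n] by (auto simp: subgrp_def)
  ultimately have "nmul n e + t = 0" using E(2) by (metis IntI singletonD)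
  then have "nmul n (- e) = t" unfolding nmul_minus by (rule minus_unique)
  moreover have "finite_order (- e)" using t n \<open>nmul n (- e) = t\<close> finite_order_nmul_iff by metis
  ultimately show ?thesis by blast
qed

theorem lemma2p15:
  assumes "mixed_group TYPE('a::ab_group_add)"
    and "\<And>H::'a set. subgrp H \<Longrightarrow> \<exists>D. direct_summand D \<and> essential_in H D"
  shows "divisible_set (torsion_part :: 'a set)"
  unfolding divisible_set_def torsion_part_def
proof (intro ballI allI impI)
  fix t :: 'a and n :: nat
  assume "t \<in> {x. finite_order x}" and n: "n > 0"
  then have t: "finite_order t" by simp
  obtain x :: 'a where x: "\<not> finite_order x" using assms(1) mixed_group_def by blast
  define w where "w = nmul n x + t"
  have "\<not> finite_order w"
    using x t finite_order_add_cancel finite_order_nmul_iff[OF n] unfolding w_def by metis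
  then have H: "torsion_free (cyclic_subgrp w)" by (rule torsion_free_cyclic_subgrp)
  obtain D where D: "direct_summand D" "essential_in (cyclic_subgrp w) D"
    using assms(2) subgrp_cyclic_subgrp by blast
  then obtain E where E: "subgrp E" "D \<inter> E = {0}" "\<forall>z. \<exists>d\<in>D. \<exists>e\<in>E. z = d + e"
    unfolding direct_summand_def by blast
  have "subgrp D" "w \<in> D"
    using D(2) generator_in_cyclic_subgrp[of w] unfolding essential_in_def by blast+
  moreover have "torsion_free D" using D(2) H by (rule torsion_free_if_essential)
  ultimately obtain y where "finite_order y" "nmul n y = t"
    using torsion_divisible_if_summand_torsion_free[OF _ _ E t n] unfolding w_def by blast
  then show "\<exists>y\<in>{x. finite_order x}. nmul n y = t" by blast
qed

end
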